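(* Let $N$ be a finite set of $n$ agents, let $k\in\{0,1,\dots,n\}$ be an integer, and let $j$ be an agent chosen uniformly at random from $N$. Let $\mathrm{OPT}$ and $\mathrm{OPT}'$ denote the optimal liquid welfare of $N$ and of $N\setminus\{j\}$ respectively. Then $$\Pr\Big[\mathrm{OPT}'\ \ge\ \Big(1-\frac{1}{k+1}\Big)\mathrm{OPT}\Big]\ \ge\ 1-\frac{k}{n}.$$
   Context: Each agent $i$ has value $v_i\ge0$ and budget $b_i\ge0$; there is a single divisible item. For an allocation $x$ with $x_i\ge0$, $\sum_i x_i\le1$, the liquid welfare is $\sum_i\min(v_ix_i,b_i)$; the optimal liquid welfare of a set of agents is the maximum of this quantity over all allocations of the item among those agents. *)

theory Defs
  imports "HOL-Probability.Probability"
begin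

text \<open>An allocation of the single divisible item among the agents of S.\<close>
definition allocation :: "'a set \<Rightarrow> ('a \<Rightarrow> real) \<Rightarrow> bool" where
  "allocation S x \<longleftrightarrow> (\<forall>i\<in>S. x i \<ge> 0) \<and> (\<Sum>i\<in>S. x i) \<le> 1"

definition liquid_welfare :: "('a \<Rightarrow> real) \<Rightarrow> ('a \<Rightarrow> real) \<Rightarrow> 'a set \<Rightarrow> ('a \<Rightarrow> real) \<Rightarrow> real" where
  "liquid_welfare v b S x = (\<Sum>i\<in>S. min (v i * x i) (b i))"

definition opt_lw :: "('a \<Rightarrow> real) \<Rightarrow> ('a \<Rightarrow> real) \<Rightarrow> 'a set \<Rightarrow> real" where
  "opt_lw v b S = Sup {liquid_welfare v b S x | x. allocation S x}"

end

theory Submission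
  imports Defs
begin

text \<open>Fix an allocation x of N with welfare L = \<Sum>i w i, where w i = min (v i * x i) (b i).
  Restricting x to N - {j} is still an allocation, so OPT(N - {j}) \<ge> L - w j. Summing over
  any B \<subseteq> N and using \<Sum>j\<in>B. w j \<le> L gives (|B| - 1) L \<le> \<Sum>j\<in>B. OPT(N - {j}), and hence
  (|B| - 1) OPT \<le> \<Sum>j\<in>B. OPT(N - {j}). If k + 1 agents j each had
  OPT(N - {j}) < k/(k+1) OPT, this sum over them would be < k OPT, a contradiction;
  so at most k of the n agents are bad, each with probability 1/n.\<close>

lemma allocation_subset:
  assumes "allocation N x" "S \<subseteq> N" "finite N"
  shows "allocation S x"
proof -
  have "(\<Sum>i\<in>S. x i) \<le> (\<Sum>i\<in>N. x i)"
    using assms by (intro sum_mono2) (auto simp: allocation_def)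
  then show ?thesis
    using assms by (auto simp: allocation_def)
qed

lemma liquid_welfare_summand_nonneg:
  assumes "allocation S x" "\<forall>i\<in>S. v i \<ge> 0" "\<forall>i\<in>S. b i \<ge> 0" "i \<in> S"
  shows "0 \<le> min (v i * x i) (b i)"
  using assms by (auto simp: allocation_def)

lemma bdd_above_liquid_welfare:
  assumes "\<forall>i\<in>S. b i \<ge> 0"
  shows "bdd_above {liquid_welfare v b S x | x. allocation S x}"
  unfolding bdd_above_def liquid_welfare_def
  by (rule exI[of _ "\<Sum>i\<in>S. b i"]) (auto intro!: sum_mono)

lemma liquid_welfare_le_opt_lw:
  assumes "allocation S x" "\<forall>i\<in>S. b i \<ge> 0"
  shows "liquid_welfare v b S x \<le> opt_lw v b S"
  unfolding opt_lw_def using assms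
  by (intro cSup_upper bdd_above_liquid_welfare) auto

lemma scaled_opt_lw_le:
  assumes bound: "\<And>x. allocation S x \<Longrightarrow> m * liquid_welfare v b S x \<le> C" and "m \<ge> 0"
  shows "m * opt_lw v b S \<le> C"
proof (cases "m = 0")
  case True
  have "allocation S (\<lambda>_. 0)"
    by (simp add: allocation_def)
  from bound[OF this] True show ?thesis
    by simp
next
  case False
  with \<open>m \<ge> 0\<close> have "m > 0" by simp
  have "opt_lw v b S \<le> C / m"
    unfolding opt_lw_def
  proof (rule cSup_least)
    show "{liquid_welfare v b S x | x. allocation S x} \<noteq> {}"
      by (auto simp: allocation_def intro!: exI[of _ "\<lambda>_. 0"])
  next
    fix w assume "w \<in> {liquid_welfare v b S x | x. allocation S x}"
    then have "m * w \<le> C"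
      using bound by blast
    with \<open>m > 0\<close> show "w \<le> C / m"
      by (simp add: pos_le_divide_eq mult.commute)
  qed
  with \<open>m > 0\<close> show ?thesis
    by (simp add: pos_le_divide_eq mult.commute)
qed

lemma liquid_welfare_remove_le_opt_lw:
  assumes "finite N" "\<forall>i\<in>N. b i \<ge> 0" "allocation N x" "j \<in> N"
  shows "liquid_welfare v b N x - min (v j * x j) (b j) \<le> opt_lw v b (N - {j})"
proof -
  have "liquid_welfare v b N x - min (v j * x j) (b j) = liquid_welfare v b (N - {j}) x"
    unfolding liquid_welfare_def using assms by (simp add: sum_diff1)
  also have "\<dots> \<le> opt_lw v b (N - {j})"
    using assms allocation_subset[OF assms(3), of "N - {j}"]
    by (intro liquid_welfare_le_opt_lw) auto
  finally show ?thesis .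
qed

lemma sum_opt_lw_remove_ge:
  assumes "finite N" "B \<subseteq> N"
    and v: "\<forall>i\<in>N. v i \<ge> 0" and b: "\<forall>i\<in>N. b i \<ge> 0"
  shows "real (card B - 1) * opt_lw v b N \<le> (\<Sum>j\<in>B. opt_lw v b (N - {j}))"
proof (cases "B = {}")
  case True
  then show ?thesis by simp
next
  case False
  have "finite B"
    using assms finite_subset by blast
  with False have "card B \<ge> 1"
    by (simp add: Suc_le_eq card_gt_0_iff)
  show ?thesis
  proof (rule scaled_opt_lw_le)
    fix x assume x: "allocation N x"
    define L where "L = liquid_welfare v b N x"
    have "(\<Sum>j\<in>B. min (v j * x j) (b j)) \<le> (\<Sum>j\<in>N. min (v j * x j) (b j))"
      using assms x by (intro sum_mono2 liquid_welfare_summand_nonneg[OF x]) auto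
    then have weights: "(\<Sum>j\<in>B. min (v j * x j) (b j)) \<le> L"
      by (simp add: L_def liquid_welfare_def)
    have "(\<Sum>j\<in>B. L - min (v j * x j) (b j)) \<le> (\<Sum>j\<in>B. opt_lw v b (N - {j}))"
      using assms x by (intro sum_mono) (auto simp: L_def intro: liquid_welfare_remove_le_opt_lw)
    with weights \<open>card B \<ge> 1\<close> show "real (card B - 1) * L \<le> (\<Sum>j\<in>B. opt_lw v b (N - {j}))"
      by (simp add: sum_subtractf left_diff_distrib)
  qed simp
qed

lemma card_opt_lw_remove_small_le:
  fixes k :: nat
  assumes fin: "finite N" and v: "\<forall>i\<in>N. v i \<ge> 0" and b: "\<forall>i\<in>N. b i \<ge> 0"
  shows "card {j\<in>N. opt_lw v b (N - {j}) < (1 - 1 / (real k + 1)) * opt_lw v b N} \<le> k"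
proof (rule ccontr)
  define OPT where "OPT = opt_lw v b N"
  define Bad where "Bad = {j\<in>N. opt_lw v b (N - {j}) < (1 - 1 / (real k + 1)) * OPT}"
  assume "\<not> ?thesis"
  then have "k + 1 \<le> card Bad"
    by (simp add: Bad_def OPT_def)
  then obtain B where B: "B \<subseteq> Bad" "card B = k + 1"
    by (meson obtain_subset_with_card_n)
  then have "B \<subseteq> N" "B \<noteq> {}" "finite B"
    using fin by (auto simp: Bad_def intro: finite_subset)
  have "real k * OPT \<le> (\<Sum>j\<in>B. opt_lw v b (N - {j}))"
    using sum_opt_lw_remove_ge[OF fin \<open>B \<subseteq> N\<close> v b] B(2) by (simp add: OPT_def)
  also have "\<dots> < (\<Sum>j\<in>B. (1 - 1 / (real k + 1)) * OPT)"
    using B(1) \<open>B \<noteq> {}\<close> \<open>finite B\<close> by (intro sum_strict_mono) (auto simp: Bad_def)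
  also have "\<dots> = real k * OPT"
    using B(2) by (simp add: field_simps)
  finally show False by simp
qed

theorem lemma5:
  fixes N :: "'a set" and v b :: "'a \<Rightarrow> real" and k :: nat
  assumes "finite N" and "N \<noteq> {}"
    and "\<forall>i\<in>N. v i \<ge> 0" and "\<forall>i\<in>N. b i \<ge> 0"
    and "k \<le> card N"
  shows "measure_pmf.prob (pmf_of_set N)
           {j. opt_lw v b (N - {j}) \<ge> (1 - 1 / (real k + 1)) * opt_lw v b N}
         \<ge> 1 - real k / real (card N)"
proof -
  define G where "G = {j. opt_lw v b (N - {j}) \<ge> (1 - 1 / (real k + 1)) * opt_lw v b N}"
  have "card N = card (N \<inter> G) + card (N - G)"
    using assms(1) by (simp add: card_Int_Diff)
  moreover have "card (N - G) \<le> k"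
    using card_opt_lw_remove_small_le[OF assms(1,3,4), of k]
    by (simp add: G_def set_diff_eq not_le)
  ultimately have good_card: "real (card N) - real k \<le> real (card (N \<inter> G))"
    by linarith
  have "card N > 0"
    using assms(1,2) by (simp add: card_gt_0_iff)
  then have "1 - real k / real (card N) = (real (card N) - real k) / real (card N)"
    by (simp add: diff_divide_distrib)
  also have "\<dots> \<le> real (card (N \<inter> G)) / real (card N)"
    using good_card by (intro divide_right_mono) auto
  finally show ?thesis
    using assms(1,2) by (simp add: G_def measure_pmf_of_set)
qed

end
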